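(* Let $A(0)=1$ and $A(n)=nA(n-1)+1$ for $n\ge1$, and for $k\ge1$ let $c_k$ be the unique integer in $[0,2^k)$ with $A(c_k)\equiv0\pmod{2^k}$. Then for all $k\ge1$, $$c_{k+1}=\begin{cases}c_k & \text{if } 2^{k+1}\mid A(c_k),\\ c_k+2^k & \text{otherwise.}\end{cases}$$
   Context: For each $k\ge1$ there is exactly one integer $n\in[0,2^k)$ with $A(n)\equiv 0\pmod{2^k}$; this is $c_k$. *)

theory Defs
  imports Main
begin

fun A :: "nat \<Rightarrow> nat" where
  "A 0 = 1"
| "A (Suc n) = Suc n * A n + 1"

definition c :: "nat \<Rightarrow> nat" where
  "c k = (THE n. n < 2 ^ k \<and> 2 ^ k dvd A n)"

end

theory Submission
  imports Defs
begin

text \<open>Since \<open>A (n + 2^k) = A n + 2^k q\<close> with \<open>q\<close> odd whenever \<open>n\<close> is odd, the residue of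
  \<open>A\<close> modulo \<open>2^k\<close> is \<open>2^k\<close>-periodic, and of the two lifts \<open>r\<close>, \<open>r + 2^k\<close> of a root \<open>r\<close>
  modulo \<open>2^k\<close> exactly one is a root modulo \<open>2^(k+1)\<close>. Induction on \<open>k\<close> then gives both
  the existence and uniqueness of \<open>c k\<close> and the recursion for \<open>c (k+1)\<close>.\<close>

lemma odd_A_iff: "odd (A n) \<longleftrightarrow> even n"
  by (induction n) auto

lemma A_add_even:
  assumes "even h" "h > 0"
  obtains q where "A (n + h) = A n + h * q" "odd q \<longleftrightarrow> odd n"
proof -
  have "\<exists>q. A (n + h) = A n + h * q \<and> (odd q \<longleftrightarrow> odd n)"
  proof (induction n)
    case 0
    obtain m where m: "h = Suc m" using assms(2) by (cases h) auto
    then have "even (A m)" using assms(1) odd_A_iff by auto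
    moreover have "A (0 + h) = A 0 + h * A m" using m by simp
    ultimately show ?case by auto
  next
    case (Suc n)
    then obtain q where q: "A (n + h) = A n + h * q" "odd q \<longleftrightarrow> odd n" by blast
    have "A (Suc n + h) = Suc (n + h) * A (n + h) + 1" by simp
    also have "\<dots> = A (Suc n) + h * (A n + Suc (n + h) * q)"
      using q(1) by (simp add: algebra_simps)
    finally show ?case
      using q(2) odd_A_iff[of n] assms(1) by (intro exI[of _ "A n + Suc (n + h) * q"]) auto
  qed
  then show thesis using that by blast
qed

lemma dvd_A_add_even_iff:
  assumes "even h" "h > 0"
  shows "h dvd A (n + h) \<longleftrightarrow> h dvd A n"
  using assms by (rule A_add_even[where n = n]) (simp add: dvd_add_left_iff)

lemma odd_if_pow2_dvd_A:
  assumes "k \<ge> 1" "2 ^ k dvd A n"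
  shows "odd n"
proof -
  have "2 dvd A n" using assms by (simp add: dvd_trans[of 2 "2 ^ k"] dvd_power)
  then show ?thesis using odd_A_iff by blast
qed

lemma pow2_Suc_dvd_A_add_iff:
  assumes "k \<ge> 1" "2 ^ k dvd A n"
  shows "2 ^ Suc k dvd A (n + 2 ^ k) \<longleftrightarrow> \<not> 2 ^ Suc k dvd A n"
proof -
  obtain m where m: "A n = 2 ^ k * m" using assms(2) by blast
  obtain q where q: "A (n + 2 ^ k) = A n + 2 ^ k * q" "odd q"
    using A_add_even[of "2 ^ k" n] odd_if_pow2_dvd_A[OF assms] assms(1) by auto
  have "A (n + 2 ^ k) = 2 ^ k * (m + q)" using q(1) m by (simp add: algebra_simps)
  then show ?thesis using m q(2) by auto
qed

definition lift_root :: "nat \<Rightarrow> nat \<Rightarrow> nat" where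
  "lift_root k r = (if 2 ^ Suc k dvd A r then r else r + 2 ^ k)"

lemma lift_root_less: "r < 2 ^ k \<Longrightarrow> lift_root k r < 2 ^ Suc k"
  by (simp add: lift_root_def)

lemma pow2_Suc_dvd_A_lift_root:
  assumes "k \<ge> 1" "2 ^ k dvd A r"
  shows "2 ^ Suc k dvd A (lift_root k r)"
  using pow2_Suc_dvd_A_add_iff[OF assms] by (simp add: lift_root_def)

lemma pow2_Suc_dvd_A_imp_lift_root:
  assumes "k \<ge> 1" "x < 2 ^ Suc k" "2 ^ Suc k dvd A x"
  shows "2 ^ k dvd A (x mod 2 ^ k) \<and> x = lift_root k (x mod 2 ^ k)"
proof -
  define r where "r = x mod 2 ^ k"
  have x_cases: "x = r \<or> x = r + 2 ^ k"
    using assms(2) unfolding r_def by (cases "x < 2 ^ k") (auto simp: le_mod_geq)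
  have "2 ^ k dvd A x" using assms(3) by (meson dvd_trans le_imp_power_dvd le_SucI order_refl)
  then have r_root: "2 ^ k dvd A r"
    using x_cases dvd_A_add_even_iff[of "2 ^ k" r] assms(1) by auto
  have "x = lift_root k r"
    using x_cases assms(3) pow2_Suc_dvd_A_add_iff[OF assms(1) r_root]
    by (auto simp: lift_root_def)
  with r_root show ?thesis unfolding r_def by blast
qed

lemma ex1_root_A_mod_pow2:
  assumes "k \<ge> 1"
  shows "\<exists>!n. n < 2 ^ k \<and> 2 ^ k dvd A n"
  using assms
proof (induction k rule: dec_induct)
  case base
  have "n = 1" if "n < 2" "2 dvd A n" for n :: nat
    using that odd_A_iff[of n] by (auto simp: less_2_cases_iff)
  then show ?case by (intro ex1I[of _ 1]) auto
next
  case (step k)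
  then obtain r where r: "r < 2 ^ k" "2 ^ k dvd A r"
    and r_unique: "\<And>n. n < 2 ^ k \<Longrightarrow> 2 ^ k dvd A n \<Longrightarrow> n = r" by blast
  show ?case
  proof (rule ex1I[of _ "lift_root k r"])
    show "lift_root k r < 2 ^ Suc k \<and> 2 ^ Suc k dvd A (lift_root k r)"
      using lift_root_less[OF r(1)] pow2_Suc_dvd_A_lift_root[OF step(1) r(2)] by blast
  next
    fix x assume "x < 2 ^ Suc k \<and> 2 ^ Suc k dvd A x"
    then show "x = lift_root k r"
      using pow2_Suc_dvd_A_imp_lift_root[OF step(1)] r_unique[of "x mod 2 ^ k"] by auto
  qed
qed

lemma c_root:
  assumes "k \<ge> 1"
  shows "c k < 2 ^ k \<and> 2 ^ k dvd A (c k)"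
  unfolding c_def by (rule theI'[OF ex1_root_A_mod_pow2[OF assms]])

lemma c_eqI:
  assumes "k \<ge> 1" "n < 2 ^ k" "2 ^ k dvd A n"
  shows "c k = n"
  unfolding c_def using ex1_root_A_mod_pow2[OF assms(1)] assms(2,3) by (simp add: the1_equality)

theorem corollaryA11:
  fixes k :: nat
  assumes "k \<ge> 1"
  shows "c (Suc k) = (if 2 ^ (Suc k) dvd A (c k) then c k else c k + 2 ^ k)"
proof -
  have "c (Suc k) = lift_root k (c k)"
  proof (rule c_eqI)
    show "lift_root k (c k) < 2 ^ Suc k"
      using c_root[OF assms] by (blast intro: lift_root_less)
    show "2 ^ Suc k dvd A (lift_root k (c k))"
      using c_root[OF assms] by (blast intro: pow2_Suc_dvd_A_lift_root[OF assms])
  qed simp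
  then show ?thesis by (simp add: lift_root_def)
qed

end
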